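(* Fix $X\in\{\mathsf B,\mathsf C,\mathsf D\}$ and $n\in\mathbb Z_{>0}$, and let $w\in W^X_n$. Let $i\in\mathbb Z$, $k\in[n]$ with $i<k$ be such that $t:=t_{ik}\in W^X_\infty$ and $\ell^X(wt)=\ell^X(w)+1$. Then (a) $wt\in W^X_{n+1}$; (b) $wt(k)<w(k)$; (c) $\mathrm{Des}(wt)\subseteq\mathrm{Des}(w)\cup\{k-1\}$. If moreover $wt\notin W^X_n$, then (d) $i=-n-1$; and (e) $\ell^X(wt\cdot t_{jk})\ne\ell^X(wt)+1$ for every integer $j$ with $i<j<k$ and $t_{jk}\in W^X_\infty$.
   Context: A signed permutation is a bijection $w$ of $\mathbb Z$ with $w(-i)=-w(i)$ for all $i$ and $w(i)=i$ for all but finitely many $i$; $(wt)(m)=w(t(m))$. $W^{\mathsf B}_\infty=W^{\mathsf C}_\infty$ is the group of all signed permutations, $W^{\mathsf D}_\infty$ the subgroup with $|\{i>0:w(i)<0\}|$ even; $W^X_n$ = elements of $W^X_\infty$ fixing every $m>n$. Lengths: $\ell^{\mathsf B}(w)=\ell^{\mathsf C}(w)=(\mathrm{inv}(w)+\ell_0(w))/2$, $\ell^{\mathsf D}(w)=(\mathrm{inv}(w)-\ell_0(w))/2$, with $\mathrm{inv}(w)=|\{(p,q)\in\mathbb Z^2:p<q,w(p)>w(q)\}|$ and $\ell_0(w)=|\{p>0:w(p)<0\}|$ (these are the Coxeter lengths for generators $t_0=(-1,1),t_1,t_2,\dots$ resp. $t_{-1}=(1,-2)(2,-1),t_1,t_2,\dots$,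 $t_m=(m,m+1)(-m,-m-1)$). For integers $i\ne0$ and $j$, $t_{ij}=(i,j)(-i,-j)$ (the identity if $i=-j$), and $t_{0j}=(-j,j)$, which lies in $W^{\mathsf B}_\infty$ but not $W^{\mathsf D}_\infty$. $\mathrm{Des}(w)=\{m\in\mathbb Z_{>0}:w(m)>w(m+1)\}$. *)

theory Defs
  imports Main
begin

datatype cox_type = TB | TC | TD

definition signed_perm :: "(int \<Rightarrow> int) \<Rightarrow> bool" where
  "signed_perm w \<longleftrightarrow> bij w \<and> (\<forall>i. w (-i) = - w i) \<and> finite {i. w i \<noteq> i}"

definition ell0 :: "(int \<Rightarrow> int) \<Rightarrow> nat" where
  "ell0 w = card {p. 0 < p \<and> w p < 0}"

definition invs :: "(int \<Rightarrow> int) \<Rightarrow> nat" where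
  "invs w = card {(p, q). p < q \<and> w p > w q}"

definition Winf :: "cox_type \<Rightarrow> (int \<Rightarrow> int) set" where
  "Winf X = (if X = TD then {w. signed_perm w \<and> even (ell0 w)} else {w. signed_perm w})"

definition Wn :: "cox_type \<Rightarrow> int \<Rightarrow> (int \<Rightarrow> int) set" where
  "Wn X n = {w \<in> Winf X. \<forall>m. m > n \<longrightarrow> w m = m}"

definition len :: "cox_type \<Rightarrow> (int \<Rightarrow> int) \<Rightarrow> nat" where
  "len X w = (if X = TD then (invs w - ell0 w) div 2 else (invs w + ell0 w) div 2)"

(* t_{ij} = (i,j)(-i,-j) for i \<noteq> 0 (identity if i = -j); t_{0j} = (-j,j) *)
definition tr :: "int \<Rightarrow> int \<Rightarrow> int \<Rightarrow> int" where
  "tr i j m = (if i = 0 then (if m = j then -j else if m = -j then j else m)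
     else if i = -j then m
     else if m = i then j else if m = j then i
     else if m = -i then -j else if m = -j then -i else m)"

definition Des :: "(int \<Rightarrow> int) \<Rightarrow> int set" where
  "Des w = {m. 0 < m \<and> w m > w (m + 1)}"

end

(*
  Let v = w t with t = t_ik. Since len = (inv +- ell0) div 2, a length increase by one forces
  inv +- ell0 to grow by 1, 2 or 3. For i \<noteq> 0, -k the reflection t is the product of the
  transpositions (i k) and (-k -i); composing with a transposition (p q) with w p < w q raises
  inv by at least 1 + 2 #{m. p < m < q, w p < w m < w q}, and ell0 changes by at most 2.
  Comparing shows that w i < w k and that no position strictly between i and k carries a value
  strictly between w i and w k (and that i \<noteq> 0, -k). Applied at the position -n-1 this gap
  condition gives i \<ge> -n-1, whence v \<in> W(n+1), and i = -n-1 as soon as v \<notin> W(n); the descent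
  claim is a case check at the positions k and |i|. Finally, if i = -n-1 then v k = -n-1 is
  smaller than every v j with -n-1 < j < k, so no further t_jk can raise the length by one.
*)
theory Submission
  imports Defs "HOL-Combinatorics.Transposition"
begin

definition inversions :: "(int \<Rightarrow> int) \<Rightarrow> (int \<times> int) set" where
  "inversions f = {(p, q). p < q \<and> f q < f p}"

lemma invs_eq_card_inversions: "invs f = card (inversions f)"
  by (simp add: invs_def inversions_def)

lemma finite_inversions:
  assumes "finite {x. f x \<noteq> x}"
  shows "finite (inversions f)"
proof -
  define S where "S = {x. f x \<noteq> x}"
  define M where "M = Max (abs ` (S \<union> f ` S) \<union> {0})"
  have M: "\<bar>x\<bar> \<le> M" "\<bar>f x\<bar> \<le> M" if "x \<in> S" for x
    using that assms by (auto simp: M_def S_def intro!: Max_ge)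
  have "inversions f \<subseteq> {-M..M} \<times> {-M..M}"
  proof clarify
    fix p q assume "(p, q) \<in> inversions f"
    then have pq: "p < q" "f q < f p" by (auto simp: inversions_def)
    then have "p \<in> S \<or> q \<in> S" by (auto simp: S_def)
    then show "p \<in> {-M..M} \<and> q \<in> {-M..M}"
      using pq M[of p] M[of q] by (cases "p \<in> S"; cases "q \<in> S") (auto simp: S_def)
  qed
  then show ?thesis by (rule finite_subset) simp
qed

lemma finite_support_comp_transpose:
  "finite {x. f x \<noteq> x} \<Longrightarrow> finite {x. (f \<circ> transpose p q) x \<noteq> x}"
  by (rule finite_subset[of _ "{x. f x \<noteq> x} \<union> {p, q}"]) (auto simp: transpose_def)

lemma card_inversions_comp_transpose_ge:
  assumes fin: "finite {x. f x \<noteq> x}" and "p < q" and "f p < f q"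
  shows "card (inversions f) + 1 + 2 * card {m. p < m \<and> m < q \<and> f p < f m \<and> f m < f q}
    \<le> card (inversions (f \<circ> transpose p q))"
proof -
  define s where "s = transpose p q"
  define C where "C = {m. p < m \<and> m < q \<and> f p < f m \<and> f m < f q}"
  \<comment> \<open>Transport each inversion of f along s unless s reverses the pair; the pairs
    (p, q), (p, m), (m, q) with m \<in> C are new inversions outside the image.\<close>
  define h where "h = (\<lambda>(x, y). if s x < s y then (s x, s y) else (x::int, y::int))"
  define E where "E = insert (p, q) ((\<lambda>m. (p, m)) ` C \<union> (\<lambda>m. (m, q)) ` C)"
  have finC: "finite C" by (rule finite_subset[of _ "{p<..<q}"]) (auto simp: C_def)
  have into: "h ` inversions f \<subseteq> inversions (f \<circ> s)"
    using assms by (auto simp: h_def s_def inversions_def transpose_def split: if_splits)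
  have inj: "inj_on h (inversions f)"
    by (auto simp: inj_on_def h_def s_def inversions_def transpose_def split: if_splits)
  have E: "E \<subseteq> inversions (f \<circ> s)"
    using assms by (auto simp: E_def C_def s_def inversions_def)
  have disj: "E \<inter> h ` inversions f = {}"
    using assms by (auto simp: E_def C_def h_def s_def inversions_def transpose_def split: if_splits)
  have "card ((\<lambda>m. (p, m)) ` C \<union> (\<lambda>m. (m, q)) ` C) = 2 * card C"
    using finC by (subst card_Un_disjoint) (auto simp: C_def card_image inj_on_def)
  moreover have "(p, q) \<notin> (\<lambda>m. (p, m)) ` C \<union> (\<lambda>m. (m, q)) ` C"
    by (auto simp: C_def)
  ultimately have "card E = 1 + 2 * card C"
    using finC by (simp add: E_def)
  moreover have "card (h ` inversions f \<union> E) \<le> card (inversions (f \<circ> s))"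
    using into E unfolding s_def
    by (intro card_mono finite_inversions finite_support_comp_transpose fin) auto
  moreover have "card (h ` inversions f \<union> E) = card (inversions f) + card E"
    using disj finC finite_inversions[OF fin] card_image[OF inj]
    by (subst card_Un_disjoint) (auto simp: E_def)
  ultimately show ?thesis
    by (simp add: C_def s_def)
qed

lemma signed_perm_minus: "signed_perm w \<Longrightarrow> w (- x) = - w x"
  by (simp add: signed_perm_def)

lemma signed_perm_zero: "signed_perm w \<Longrightarrow> w 0 = 0"
  using signed_perm_minus[of w 0] by simp

lemma signed_perm_eq_iff: "signed_perm w \<Longrightarrow> w x = w y \<longleftrightarrow> x = y"
  by (auto simp: signed_perm_def bij_def inj_def)

lemma signed_perm_eq_zero_iff: "signed_perm w \<Longrightarrow> w x = 0 \<longleftrightarrow> x = 0"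
  using signed_perm_eq_iff[of w x 0] signed_perm_zero[of w] by simp

lemma signed_perm_finite_support: "signed_perm w \<Longrightarrow> finite {x. w x \<noteq> x}"
  by (simp add: signed_perm_def)

lemma signed_perm_comp:
  assumes "signed_perm w" "signed_perm t"
  shows "signed_perm (w \<circ> t)"
proof -
  have "{x. w (t x) \<noteq> x} \<subseteq> {x. t x \<noteq> x} \<union> {x. w x \<noteq> x}" by auto
  with assms show ?thesis
    by (auto simp: signed_perm_def bij_comp intro: finite_subset)
qed

lemma Winf_signed_perm: "w \<in> Winf X \<Longrightarrow> signed_perm w"
  by (simp add: Winf_def split: if_splits)

lemma Wn_signed_perm: "w \<in> Wn X n \<Longrightarrow> signed_perm w"
  by (auto simp: Wn_def intro: Winf_signed_perm)

lemma Wn_fixes_above: "w \<in> Wn X n \<Longrightarrow> n < m \<Longrightarrow> w m = m"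
  by (simp add: Wn_def)

lemma Wn_fixes_below: "w \<in> Wn X n \<Longrightarrow> m < - n \<Longrightarrow> w m = m"
  using Wn_fixes_above[of w X n "- m"] signed_perm_minus[OF Wn_signed_perm, of w X n "- m"]
  by simp

lemma Wn_abs_le:
  assumes w: "w \<in> Wn X n" and "\<bar>x\<bar> \<le> n"
  shows "\<bar>w x\<bar> \<le> n"
proof (rule ccontr)
  assume "\<not> \<bar>w x\<bar> \<le> n"
  then have "w (w x) = w x"
    using Wn_fixes_above[OF w] Wn_fixes_below[OF w] by (cases "0 \<le> w x") auto
  then have "w x = x"
    using signed_perm_eq_iff[OF Wn_signed_perm[OF w]] by simp
  with \<open>\<not> \<bar>w x\<bar> \<le> n\<close> \<open>\<bar>x\<bar> \<le> n\<close> show False by simp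
qed

lemma ell0_le_invs:
  assumes "signed_perm w"
  shows "ell0 w \<le> invs w"
proof -
  have "card {p. 0 < p \<and> w p < 0} \<le> card (inversions w)"
  proof (rule card_inj_on_le[where f = "\<lambda>p. (- p, p)"])
    show "(\<lambda>p. (- p, p)) ` {p. 0 < p \<and> w p < 0} \<subseteq> inversions w"
      using signed_perm_minus[OF assms] by (auto simp: inversions_def)
  qed (auto simp: inj_on_def finite_inversions signed_perm_finite_support assms)
  then show ?thesis by (simp add: ell0_def invs_eq_card_inversions)
qed

definition ell0_sign :: "cox_type \<Rightarrow> int" where
  "ell0_sign X = (if X = TD then - 1 else 1)"

lemma int_len:
  "signed_perm w \<Longrightarrow> int (len X w) = (int (invs w) + ell0_sign X * int (ell0 w)) div 2"
  using ell0_le_invs[of w] by (simp add: len_def ell0_sign_def zdiv_int of_nat_diff)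

lemma len_Suc_bounds:
  assumes "signed_perm v" "signed_perm w" "len X v = len X w + 1"
  shows "1 \<le> int (invs v) - int (invs w) + ell0_sign X * (int (ell0 v) - int (ell0 w))"
    and "int (invs v) - int (invs w) + ell0_sign X * (int (ell0 v) - int (ell0 w)) \<le> 3"
proof -
  have "(int (invs v) + ell0_sign X * int (ell0 v)) div 2
      = (int (invs w) + ell0_sign X * int (ell0 w)) div 2 + 1"
    using assms(3) int_len[OF assms(1), of X] int_len[OF assms(2), of X] by simp
  then show "1 \<le> int (invs v) - int (invs w) + ell0_sign X * (int (ell0 v) - int (ell0 w))"
    and "int (invs v) - int (invs w) + ell0_sign X * (int (ell0 v) - int (ell0 w)) \<le> 3"
    by (simp_all add: algebra_simps)
qed

lemma ell0_diff_two_points: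
  assumes "finite {x. f x \<noteq> x}" "finite {x. g x \<noteq> x}" and "j \<noteq> k"
    and agree: "\<And>p. 0 < p \<Longrightarrow> p \<noteq> j \<Longrightarrow> p \<noteq> k \<Longrightarrow> g p = f p"
  shows "int (ell0 g) - int (ell0 f)
    = (of_bool (0 < j \<and> g j < 0) - of_bool (0 < j \<and> f j < 0))
      + (of_bool (0 < k \<and> g k < 0) - of_bool (0 < k \<and> f k < 0))"
proof -
  define N where "N h = {p. 0 < p \<and> h p < 0}" for h :: "int \<Rightarrow> int"
  have card_N: "card (N h)
      = card (N h - {j, k}) + of_bool (0 < j \<and> h j < 0) + of_bool (0 < k \<and> h k < 0)"
    if "finite {x. h x \<noteq> x}" for h
  proof -
    have "finite (N h)" by (rule finite_subset[OF _ that]) (auto simp: N_def)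
    then have "card (N h) = card (N h \<inter> {j, k}) + card (N h - {j, k})"
      by (rule card_Int_Diff)
    moreover have "card (N h \<inter> {j, k}) = of_bool (0 < j \<and> h j < 0) + of_bool (0 < k \<and> h k < 0)"
      using \<open>j \<noteq> k\<close> by (auto simp: N_def Int_insert_right)
    ultimately show ?thesis by simp
  qed
  have "N g - {j, k} = N f - {j, k}" using agree by (auto simp: N_def)
  then show ?thesis
    using card_N[OF assms(1)] card_N[OF assms(2)] by (simp add: ell0_def N_def[symmetric])
qed

lemma comp_tr_tr: "k \<noteq> 0 \<Longrightarrow> (w \<circ> tr i k) \<circ> tr i k = w"
  by (auto simp: fun_eq_iff tr_def)

lemma tr_minus_self: "tr (- k) k = id"
  by (simp add: fun_eq_iff tr_def)

lemma tr_zero_eq_transpose: "tr 0 k = transpose (- k) k"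
  by (auto simp: fun_eq_iff tr_def transpose_def)

lemma tr_eq_transpose_comp:
  "i \<noteq> 0 \<Longrightarrow> k \<noteq> 0 \<Longrightarrow> i \<noteq> - k \<Longrightarrow> tr i k = transpose i k \<circ> transpose (- k) (- i)"
  by (auto simp: fun_eq_iff tr_def transpose_def)

lemma ell0_comp_tr:
  assumes w: "signed_perm w" and "0 < k" "i < k" "i \<noteq> - k"
  shows "int (ell0 (w \<circ> tr i k)) = int (ell0 w) + (if i \<le> 0 then sgn (w k) - sgn (w i) else 0)"
proof -
  have fin: "finite {x. (w \<circ> tr i k) x \<noteq> x}"
    by (rule finite_subset[of _ "{x. w x \<noteq> x} \<union> {i, -i, k, -k}"])
       (auto simp: tr_def signed_perm_finite_support[OF w])
  have "\<bar>i\<bar> \<noteq> k" using assms by auto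
  moreover have "(w \<circ> tr i k) p = w p" if "0 < p" "p \<noteq> \<bar>i\<bar>" "p \<noteq> k" for p
    using that assms by (auto simp: tr_def)
  ultimately have "int (ell0 (w \<circ> tr i k)) - int (ell0 w)
    = (of_bool (0 < \<bar>i\<bar> \<and> (w \<circ> tr i k) \<bar>i\<bar> < 0) - of_bool (0 < \<bar>i\<bar> \<and> w \<bar>i\<bar> < 0))
      + (of_bool (0 < k \<and> (w \<circ> tr i k) k < 0) - of_bool (0 < k \<and> w k < 0))"
    by (rule ell0_diff_two_points[OF signed_perm_finite_support[OF w] fin])
  moreover have "tr i k k = (if i = 0 then - k else i)"
    and "i \<noteq> 0 \<Longrightarrow> tr i k \<bar>i\<bar> = (if 0 < i then k else - k)"
    using assms by (auto simp: tr_def)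
  ultimately show ?thesis
    using assms signed_perm_minus[OF w, of k] signed_perm_minus[OF w, of i]
      signed_perm_eq_zero_iff[OF w, of k] signed_perm_eq_zero_iff[OF w, of i]
    by (cases i "0::int" rule: linorder_cases) (auto simp: sgn_if)
qed

lemma invs_comp_tr_ge:
  assumes w: "signed_perm w" and "0 < k" "i < k" "i \<noteq> 0" "i \<noteq> - k" and "w i < w k"
  shows "invs w + 2 + 2 * card {m. i < m \<and> m < k \<and> w i < w m \<and> w m < w k}
      + 2 * of_bool (i < 0 \<and> w i < 0 \<and> 0 < w k) \<le> invs (w \<circ> tr i k)"
proof -
  define w1 where "w1 = w \<circ> transpose i k"
  define C1 where "C1 = {m. i < m \<and> m < k \<and> w i < w m \<and> w m < w k}"
  define C2 where "C2 = {m. - k < m \<and> m < - i \<and> w1 (- k) < w1 m \<and> w1 m < w1 (- i)}"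
  have fin: "finite {x. w x \<noteq> x}" by (rule signed_perm_finite_support[OF w])
  have w1_vals: "w1 (- k) = - w k" "w1 (- i) = - w i" "w1 0 = 0"
    using assms signed_perm_minus[OF w] signed_perm_zero[OF w] by (auto simp: w1_def)
  have "invs w + 1 + 2 * card C1 \<le> invs w1"
    using card_inversions_comp_transpose_ge[OF fin \<open>i < k\<close> \<open>w i < w k\<close>]
    by (simp add: invs_eq_card_inversions w1_def C1_def)
  moreover have "invs w1 + 1 + 2 * card C2 \<le> invs (w \<circ> tr i k)"
    using card_inversions_comp_transpose_ge[of w1 "- k" "- i"] assms w1_vals
      finite_support_comp_transpose[OF fin]
    by (simp add: invs_eq_card_inversions C2_def w1_def tr_eq_transpose_comp o_assoc)
  moreover have "card C2 \<ge> 1" if "i < 0 \<and> w i < 0 \<and> 0 < w k"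
  proof -
    have "0 \<in> C2" using that assms w1_vals by (simp add: C2_def)
    moreover have "finite C2" by (rule finite_subset[of _ "{- k<..<- i}"]) (auto simp: C2_def)
    ultimately show ?thesis by (metis One_nat_def Suc_leI card_gt_0_iff empty_iff)
  qed
  ultimately show ?thesis unfolding C1_def[symmetric] by (cases "i < 0 \<and> w i < 0 \<and> 0 < w k") auto
qed

lemma invs_comp_tr_zero_ge:
  assumes w: "signed_perm w" and "0 < k" "0 < w k"
  shows "invs w + 3 \<le> invs (w \<circ> tr 0 k)"
proof -
  define C where "C = {m. - k < m \<and> m < k \<and> w (- k) < w m \<and> w m < w k}"
  have "0 \<in> C"
    using assms signed_perm_minus[OF w, of k] signed_perm_zero[OF w] by (simp add: C_def)
  moreover have "finite C" by (rule finite_subset[of _ "{- k<..<k}"]) (auto simp: C_def)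
  ultimately have "1 \<le> card C" by (metis One_nat_def Suc_leI card_gt_0_iff empty_iff)
  moreover have "invs w + 1 + 2 * card C \<le> invs (w \<circ> tr 0 k)"
    using card_inversions_comp_transpose_ge[OF signed_perm_finite_support[OF w], of "- k" k] assms
      signed_perm_minus[OF w, of k]
    by (simp add: invs_eq_card_inversions C_def tr_zero_eq_transpose)
  ultimately show ?thesis by linarith
qed

lemma tr_zero_notin_Winf_TD:
  assumes "0 < k"
  shows "tr 0 k \<notin> Winf TD"
proof -
  have "{p. 0 < p \<and> tr 0 k p < 0} = {k}" using assms by (auto simp: tr_def)
  then show ?thesis by (simp add: Winf_def ell0_def)
qed

text \<open>Position 0 is counted in invs, so composing with t_0k changes inv + ell0 by at least 4
  in absolute value: t_0k never raises the length by exactly one.\<close>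

lemma len_comp_tr_zero_ne_Suc:
  assumes w: "signed_perm w" and "0 < k" and "tr 0 k \<in> Winf X"
  shows "len X (w \<circ> tr 0 k) \<noteq> len X w + 1"
proof
  define v where "v = w \<circ> tr 0 k"
  assume "len X (w \<circ> tr 0 k) = len X w + 1"
  then have L: "len X v = len X w + 1" by (simp add: v_def)
  have v: "signed_perm v"
    unfolding v_def using assms by (blast intro: signed_perm_comp Winf_signed_perm)
  have "ell0_sign X = 1"
    using assms tr_zero_notin_Winf_TD by (auto simp: ell0_sign_def)
  with len_Suc_bounds[OF v w L]
  have bounds: "1 \<le> int (invs v) - int (invs w) + (int (ell0 v) - int (ell0 w))"
    "int (invs v) - int (invs w) + (int (ell0 v) - int (ell0 w)) \<le> 3"
    by simp_all
  have "int (ell0 v) = int (ell0 w) + sgn (w k)"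
    using ell0_comp_tr[OF w \<open>0 < k\<close>] signed_perm_zero[OF w] assms by (simp add: v_def)
  moreover have "w k \<noteq> 0" using signed_perm_eq_zero_iff[OF w] assms by simp
  ultimately consider "0 < w k" "int (ell0 v) = int (ell0 w) + 1"
    | "w k < 0" "int (ell0 v) = int (ell0 w) - 1"
    by (cases "0 < w k") (auto simp: sgn_if)
  then show False
  proof cases
    case 1
    then show False using invs_comp_tr_zero_ge[OF w \<open>0 < k\<close>] bounds by (simp add: v_def)
  next
    case 2
    then have "0 < v k" using signed_perm_minus[OF w] by (simp add: v_def tr_def)
    then show False
      using 2 invs_comp_tr_zero_ge[OF v \<open>0 < k\<close>] bounds comp_tr_tr[of k w 0] assms
      by (simp add: v_def)
  qed
qed

lemma len_comp_tr_Suc_imp: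
  assumes w: "signed_perm w" and t: "tr i k \<in> Winf X" and "0 < k" "i < k"
    and L: "len X (w \<circ> tr i k) = len X w + 1"
  shows "i \<noteq> 0" and "i \<noteq> - k" and "w i < w k"
    and "\<And>m. i < m \<Longrightarrow> m < k \<Longrightarrow> \<not> (w i < w m \<and> w m < w k)"
proof -
  define v where "v = w \<circ> tr i k"
  define C where "C = {m. i < m \<and> m < k \<and> w i < w m \<and> w m < w k}"
  show i0: "i \<noteq> 0" using len_comp_tr_zero_ne_Suc[OF w \<open>0 < k\<close>] t L by blast
  show ik: "i \<noteq> - k" using L by (auto simp: tr_minus_self)
  have v: "signed_perm v"
    unfolding v_def using assms by (blast intro: signed_perm_comp Winf_signed_perm)
  have "len X v = len X w + 1" using L by (simp add: v_def)
  note bounds = len_Suc_bounds[OF v w this]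
  have sign: "ell0_sign X = 1 \<or> ell0_sign X = - 1" by (simp add: ell0_sign_def)
  have dE: "int (ell0 v) - int (ell0 w) = (if i \<le> 0 then sgn (w k) - sgn (w i) else 0)"
    using ell0_comp_tr[OF w \<open>0 < k\<close> \<open>i < k\<close> ik] by (simp add: v_def)
  have vik: "v i = w k" "v k = w i" using i0 ik by (auto simp: v_def tr_def)
  show lt: "w i < w k"
  proof (rule ccontr)
    assume "\<not> w i < w k"
    then have "v i < v k"
      using vik signed_perm_eq_iff[OF w, of i k] \<open>i < k\<close> by auto
    then have "invs v + 2 \<le> invs w"
      using invs_comp_tr_ge[OF v \<open>0 < k\<close> \<open>i < k\<close> i0 ik] comp_tr_tr[of k w i] \<open>0 < k\<close>
      by (simp add: v_def)
    moreover have "- 2 \<le> int (ell0 v) - int (ell0 w) \<and> int (ell0 v) - int (ell0 w) \<le> 0"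
      using dE \<open>\<not> w i < w k\<close> by (auto simp: sgn_if)
    ultimately show False using bounds sign by auto
  qed
  have "int (ell0 v) - int (ell0 w) = 2 * of_bool (i < 0 \<and> w i < 0 \<and> 0 < w k)"
    using dE lt i0 signed_perm_eq_zero_iff[OF w, of i] signed_perm_eq_zero_iff[OF w, of k] \<open>0 < k\<close>
    by (auto simp: sgn_if)
  then have "card C = 0"
    using invs_comp_tr_ge[OF w \<open>0 < k\<close> \<open>i < k\<close> i0 ik lt] bounds sign
    unfolding C_def[symmetric] v_def by (cases "i < 0 \<and> w i < 0 \<and> 0 < w k") auto
  moreover have "finite C" by (rule finite_subset[of _ "{i<..<k}"]) (auto simp: C_def)
  ultimately show "\<And>m. i < m \<Longrightarrow> m < k \<Longrightarrow> \<not> (w i < w m \<and> w m < w k)"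
    by (auto simp: C_def)
qed

lemma Des_comp_tr_subset:
  assumes w: "signed_perm w" and "0 < k" "i < k" "i \<noteq> 0" "i \<noteq> - k" and lt: "w i < w k"
    and gap: "\<And>m. i < m \<Longrightarrow> m < k \<Longrightarrow> \<not> (w i < w m \<and> w m < w k)"
  shows "Des (w \<circ> tr i k) \<subseteq> Des w \<union> {k - 1}"
proof
  fix m assume "m \<in> Des (w \<circ> tr i k)"
  then have "0 < m" and desc: "w (tr i k (m + 1)) < w (tr i k m)" by (auto simp: Des_def)
  have tr_pos: "tr i k p = (if p = k then i else if p = \<bar>i\<bar> then (if 0 < i then k else - k) else p)"
    if "0 < p" for p
    using that assms by (auto simp: tr_def)
  have minus: "w (- x) = - w x" for x by (rule signed_perm_minus[OF w])
  show "m \<in> Des w \<union> {k - 1}"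
  proof (rule ccontr)
    assume "m \<notin> Des w \<union> {k - 1}"
    then have asc: "w m < w (m + 1)" and "m + 1 \<noteq> k"
      using \<open>0 < m\<close> signed_perm_eq_iff[OF w, of m "m + 1"] by (auto simp: Des_def)
    consider "m = k" | "m = \<bar>i\<bar>" "m \<noteq> k" | "m + 1 = \<bar>i\<bar>" "m \<noteq> k"
      | "m \<noteq> k" "m \<noteq> \<bar>i\<bar>" "m + 1 \<noteq> \<bar>i\<bar>" by blast
    then show False
    proof cases
      case 1
      then show False
        using desc asc lt tr_pos[of m] tr_pos[of "m + 1"] minus[of i] minus[of k] \<open>0 < m\<close> \<open>i < k\<close>
        by (auto split: if_splits)
    next
      case 2
      then show False
        using desc asc lt tr_pos[of m] tr_pos[of "m + 1"] minus[of i] minus[of k] gap[of "i + 1"]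
          \<open>0 < m\<close> \<open>m + 1 \<noteq> k\<close> \<open>i < k\<close>
        by (auto split: if_splits)
    next
      case 3
      then show False
        using desc asc lt tr_pos[of m] tr_pos[of "m + 1"] minus[of i] minus[of k] minus[of m]
          gap[of "- m"] \<open>0 < m\<close> \<open>0 < k\<close> \<open>m + 1 \<noteq> k\<close> \<open>i < k\<close>
        by (auto split: if_splits)
    next
      case 4
      then show False
        using desc asc tr_pos[of m] tr_pos[of "m + 1"] \<open>0 < m\<close> \<open>m + 1 \<noteq> k\<close> by auto
    qed
  qed
qed

lemma Winf_comp_tr:
  assumes w: "w \<in> Winf X" and t: "tr i k \<in> Winf X" and "0 < k" "i < k"
  shows "w \<circ> tr i k \<in> Winf X"
proof (cases "i = - k")
  case False
  have sp: "signed_perm w" "signed_perm (w \<circ> tr i k)"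
    using w t by (auto intro: signed_perm_comp Winf_signed_perm)
  have "even (ell0 (w \<circ> tr i k)) = even (ell0 w)" if "X = TD"
  proof -
    have "i \<noteq> 0" using t that tr_zero_notin_Winf_TD[OF \<open>0 < k\<close>] by auto
    then have "w i \<noteq> 0" "w k \<noteq> 0"
      using signed_perm_eq_zero_iff[OF sp(1)] \<open>0 < k\<close> by auto
    then have "even (int (ell0 (w \<circ> tr i k))) = even (int (ell0 w))"
      using ell0_comp_tr[OF sp(1) \<open>0 < k\<close> \<open>i < k\<close> False] by (auto simp: sgn_if)
    then show ?thesis by simp
  qed
  with w sp show ?thesis by (auto simp: Winf_def)
qed (use w in \<open>simp add: tr_minus_self\<close>)

lemma comp_tr_in_Wn:
  assumes w: "w \<in> Wn X n" and t: "tr i k \<in> Winf X"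
    and "0 < k" "k \<le> n'" "n \<le> n'" "i < k" "- n' \<le> i"
  shows "w \<circ> tr i k \<in> Wn X n'"
proof -
  have "(w \<circ> tr i k) m = m" if "n' < m" for m
    using that assms Wn_fixes_above[OF w, of m] by (auto simp: tr_def)
  moreover have "w \<circ> tr i k \<in> Winf X"
    using w t assms by (intro Winf_comp_tr) (auto simp: Wn_def)
  ultimately show ?thesis by (simp add: Wn_def)
qed

lemma Wn_gap_lower_bound:
  assumes w: "w \<in> Wn X n" and "0 < k" "k \<le> n" "i < k"
    and gap: "\<And>m. i < m \<Longrightarrow> m < k \<Longrightarrow> \<not> (w i < w m \<and> w m < w k)"
  shows "- n - 1 \<le> i"
proof (rule ccontr)
  assume "\<not> - n - 1 \<le> i"
  then have "w i < w (- n - 1)" "w (- n - 1) < w k"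
    using Wn_fixes_below[OF w] Wn_abs_le[OF w, of k] assms by auto
  with gap[of "- n - 1"] \<open>\<not> - n - 1 \<le> i\<close> assms show False by auto
qed

lemma len_comp_tr_comp_tr_ne_Suc:
  assumes w: "w \<in> Wn X n" and "0 < k" "k \<le> n" and t: "tr (- n - 1) k \<in> Winf X"
    and "- n - 1 < j" "j < k" "tr j k \<in> Winf X"
  shows "len X (w \<circ> tr (- n - 1) k \<circ> tr j k) \<noteq> len X (w \<circ> tr (- n - 1) k) + 1"
proof
  define v where "v = w \<circ> tr (- n - 1) k"
  assume "len X (w \<circ> tr (- n - 1) k \<circ> tr j k) = len X (w \<circ> tr (- n - 1) k) + 1"
  moreover have "signed_perm v"
    unfolding v_def using Wn_signed_perm[OF w] Winf_signed_perm[OF t] by (rule signed_perm_comp)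
  ultimately have "j \<noteq> - k" "v j < v k"
    using len_comp_tr_Suc_imp[of v j k X] assms by (auto simp: v_def)
  moreover have "v k = - n - 1"
    using Wn_fixes_below[OF w, of "- n - 1"] assms by (simp add: v_def tr_def)
  moreover have "v j = w j" using assms \<open>j \<noteq> - k\<close> by (auto simp: v_def tr_def)
  moreover have "\<bar>w j\<bar> \<le> n" using Wn_abs_le[OF w, of j] assms by simp
  ultimately show False by simp
qed

theorem lemma2p4:
  fixes X :: cox_type and n i k :: int and w :: "int \<Rightarrow> int"
  assumes "n > 0"
    and "w \<in> Wn X n"
    and "1 \<le> k" and "k \<le> n" and "i < k"
    and "tr i k \<in> Winf X"
    and "len X (w \<circ> tr i k) = len X w + 1"
  shows "w \<circ> tr i k \<in> Wn X (n + 1)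
    \<and> (w \<circ> tr i k) k < w k
    \<and> Des (w \<circ> tr i k) \<subseteq> Des w \<union> {k - 1}
    \<and> (w \<circ> tr i k \<notin> Wn X n \<longrightarrow>
         i = - n - 1
         \<and> (\<forall>j. i < j \<and> j < k \<and> tr j k \<in> Winf X \<longrightarrow>
               len X ((w \<circ> tr i k) \<circ> tr j k) \<noteq> len X (w \<circ> tr i k) + 1))"
proof -
  have w: "signed_perm w" using assms(2) by (rule Wn_signed_perm)
  have k: "0 < k" using assms(3) by simp
  note cover = len_comp_tr_Suc_imp[OF w assms(6) k assms(5) assms(7)]
  have i_ge: "- n - 1 \<le> i" using Wn_gap_lower_bound[OF assms(2) k assms(4,5) cover(4)] .
  have exit: "i = - n - 1" if "w \<circ> tr i k \<notin> Wn X n"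
    using comp_tr_in_Wn[OF assms(2) assms(6) k assms(4) order_refl assms(5)] i_ge that by fastforce
  have "w \<circ> tr i k \<in> Wn X (n + 1)"
    using comp_tr_in_Wn[OF assms(2,6) k] assms i_ge by simp
  moreover have "(w \<circ> tr i k) k < w k"
    using cover(1-3) assms(5) by (simp add: tr_def)
  moreover have "Des (w \<circ> tr i k) \<subseteq> Des w \<union> {k - 1}"
    using Des_comp_tr_subset[OF w k assms(5) cover] .
  moreover have "len X ((w \<circ> tr i k) \<circ> tr j k) \<noteq> len X (w \<circ> tr i k) + 1"
    if "w \<circ> tr i k \<notin> Wn X n" "i < j" "j < k" "tr j k \<in> Winf X" for j
    using that exit len_comp_tr_comp_tr_ne_Suc[OF assms(2) k assms(4)] assms(6) by auto
  ultimately show ?thesis using exit by blast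
qed

end
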